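(* Let $\mathcal X$ (inputs) and $\mathcal Y$ (labels) be standard Borel spaces. Let $(X,Y)$ have a joint "retain" law whose $X$-marginal is $p^r$, and let $\eta_x:=\mathcal L(Y\mid X=x)$ be its regular conditional law. Let $p^u$ be a probability measure on $\mathcal X$, $\alpha\in(0,1]$, and $p^d:=(1-\alpha)p^r+\alpha p^u$. Let $\mathcal H$ be a measurable space and $Q:\mathcal H\times\mathcal X\to\mathcal P(\mathcal Y)$, $(\theta,x)\mapsto Q_\theta(\cdot\mid x)$, a Markov kernel (the predictive distribution of model $\theta$). For an $\mathcal H$-valued random element $\Theta$ and a probability measure $p$ on $\mathcal X$, let $\mu_\Theta^p$ denote the law of $\hat Y$ where $X\sim p$ is independent of $\Theta$ and, conditionally on $(\Theta,X)$, $\hat Y\sim Q_\Theta(\cdot\mid X)$. Define the (averaged) log-loss regret $$\overline{\mathrm{reg}}_{\log}(\Theta):=\mathbb E_\Theta\int_{\mathcal X}D_{\mathrm{KL}}\big(\eta_x\,\Vert\,Q_\Theta(\cdot\mid x)\big)\,p^r(dx).$$ Let $\pi\in(0,1)$ and let $(X_{\mathrm{margin}},Z)$ satisfy $Z\sim\mathrm{Bernoulli}(\pi)$, $\mathcal L(X_{\mathrm{margin}}\mid Z=1)=p^r$, $\mathcal L(X_{\mathrm{margin}}\mid Z=0)=p^d$. Let $\Theta_u,\Theta_r$ be $\mathcal H$-valued random elements, with $\Theta_u$ independent of $(X_{\mathrm{margin}},Z)$, and let $\hat Y_{\mathrm{margin}}$ satisfy $\hat Y_{\mathrm{margin}}\mid(\Theta_u,X_{\mathrm{margin}},Z)\sim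 Q_{\Theta_u}(\cdot\mid X_{\mathrm{margin}})$. Assume $\overline{\mathrm{reg}}_{\log}(\Theta_u)\le\delta$, $\overline{\mathrm{reg}}_{\log}(\Theta_r)\le\delta_g$, and $I(\hat Y_{\mathrm{margin}};Z)\le\varepsilon_u$. Then $$\mathrm{TV}\big(\mu_{\Theta_u}^{p^d},\mu_{\Theta_r}^{p^d}\big)\le\sqrt{\tfrac12}\big(\sqrt\delta+\sqrt{\delta_g}\big)+\sqrt{\frac{\varepsilon_u}{2\pi(1-\pi)}}+\mathrm{TV}\big(\mu_{\Theta_r}^{p^r},\mu_{\Theta_r}^{p^d}\big).$$
   Context: $\mathrm{TV}(P,Q)=\sup_A|P(A)-Q(A)|$. $D_{\mathrm{KL}}$ is Kullback–Leibler divergence and $I$ is mutual information; both computed with the same logarithm base (base 2 in the paper; the bound also holds with natural logarithms). Interpretation: $\Theta_u$ is the unlearned model, $\Theta_r$ the model retrained on the retain set, $p^r$ the retain distribution, $p^u$ the unlearn distribution. *)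

theory Defs
  imports "HOL-Probability.Probability"
begin

definition TV :: "'a measure \<Rightarrow> 'a measure \<Rightarrow> real" where
  "TV P Q = (SUP A\<in>sets P. \<bar>measure P A - measure Q A\<bar>)"

(* With f = dP/dQ we use
   D(P||Q) = \<integral> (f ln f - f + 1) dQ, whose integrand is nonnegative
   (and equals \<integral> f ln f dQ since \<integral> f dQ = 1). *)
definition KL_div :: "'a measure \<Rightarrow> 'a measure \<Rightarrow> ennreal" where
  "KL_div P Q =
     (if absolutely_continuous Q P then
        (\<integral>\<^sup>+ x. ennreal (let f = enn2real (RN_deriv Q P x) in f * ln f - f + 1) \<partial>Q)
      else \<infinity>)"

definition mutual_info :: "'a measure \<Rightarrow> 'b measure \<Rightarrow> ('a \<times> 'b) measure \<Rightarrow> ennreal" where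
  "mutual_info M1 M2 J = KL_div J (distr J M1 fst \<Otimes>\<^sub>M distr J M2 snd)"

definition mix_measure :: "real \<Rightarrow> 'a measure \<Rightarrow> 'a measure \<Rightarrow> 'a measure" where
  "mix_measure a M N = measure_of (space M) (sets M)
     (\<lambda>A. ennreal (1 - a) * emeasure M A + ennreal a * emeasure N A)"

definition pred_law :: "'h measure \<Rightarrow> 'x measure \<Rightarrow> ('h \<times> 'x \<Rightarrow> 'y measure) \<Rightarrow> 'y measure" where
  "pred_law P\<Theta> p Q = (P\<Theta> \<Otimes>\<^sub>M p) \<bind> Q"

definition avg_reg_log :: "'h measure \<Rightarrow> 'x measure \<Rightarrow> ('x \<Rightarrow> 'y measure) \<Rightarrow> ('h \<times> 'x \<Rightarrow> 'y measure) \<Rightarrow> ennreal" where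
  "avg_reg_log P\<Theta> pr \<eta> Q = (\<integral>\<^sup>+ \<theta>. (\<integral>\<^sup>+ x. KL_div (\<eta> x) (Q (\<theta>, x)) \<partial>pr) \<partial>P\<Theta>)"

definition margin_joint :: "real \<Rightarrow> 'h measure \<Rightarrow> 'x measure \<Rightarrow> 'x measure \<Rightarrow> 'y measure
     \<Rightarrow> ('h \<times> 'x \<Rightarrow> 'y measure) \<Rightarrow> ('y \<times> bool) measure" where
  "margin_joint \<pi> P\<Theta> pr pd MY Q =
     measure_pmf (bernoulli_pmf \<pi>) \<bind>
       (\<lambda>z. distr (pred_law P\<Theta> (if z then pr else pd) Q) (MY \<Otimes>\<^sub>M count_space UNIV) (\<lambda>y. (y, z)))"

end

theory Submission
  imports Defs
begin

(*
  The whole argument rests on the elementary inequality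
    t ln t - t + 1 \<ge> b (t - 1) - b\<^sup>2 (t + 2) / 6      (t \<ge> 0, b real),
  which integrated against dP/dR gives the variational lower bound
    D(P || R) \<ge> E_P b - E_R b - (E_P b\<^sup>2 + 2 E_R b\<^sup>2) / 6
  for every bounded test function b.  Its right-hand side is affine in the pair (P, R), so it
  survives averaging over (\<Theta>, x).  With b = c (1_A - 1/2) and c optimised this is Pinsker's
  inequality |P(A) - R(A)| \<le> sqrt (D / 2), which bounds the distance from the prediction laws of
  \<Theta>_u and \<Theta>_r to the averaged true label law on p^r.  On the labelled mixture (\<hat>Y, Z) the test
  function c(Z) (1_A(\<hat>Y) - 1/2), with c chosen to have mean zero under Z, gives
  I(\<hat>Y; Z) \<ge> 2 \<pi> (1 - \<pi>) (\<mu>_1(A) - \<mu>_0(A))\<^sup>2, which bounds the distance between the prediction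
  laws of \<Theta>_u on p^r and on p^d.  The theorem is the triangle inequality through these laws.
*)

lemma ln_ge_rational:
  fixes t :: real
  assumes t: "0 < t"
  shows "(t - 1) * (5 * t + 1) / (2 * t * (t + 2)) \<le> ln t"
proof -
  define g where "g x = ln x - (x - 1) * (5 * x + 1) / (2 * x * (x + 2))" for x :: real
  define g' where "g' x = (x - 1) ^ 3 / (x\<^sup>2 * (x + 2)\<^sup>2)" for x :: real
  have deriv: "(g has_real_derivative g' x) (at x)" if "0 < x" for x
  proof -
    have nz: "x * 4 + x * (x * 2) \<noteq> 0" using that by (smt (verit) mult_pos_pos)
    have "(g has_real_derivative (1 / x - ((10 * x - 4) * (2 * x * (x + 2))
        - (x - 1) * (5 * x + 1) * (4 * x + 4)) / (2 * x * (x + 2))\<^sup>2)) (at x)"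
      unfolding g_def using that nz
      by (auto intro!: derivative_eq_intros simp: algebra_simps power2_eq_square)
    moreover have "1 / x - ((10 * x - 4) * (2 * x * (x + 2)) - (x - 1) * (5 * x + 1) * (4 * x + 4))
        / (2 * x * (x + 2))\<^sup>2 = g' x"
    proof -
      have "(2 * x * (x + 2))\<^sup>2 = 4 * (x\<^sup>2 * (x + 2)\<^sup>2)" by (simp add: power2_eq_square)
      then show ?thesis using that unfolding g'_def
        by (simp add: divide_simps) (simp add: algebra_simps power2_eq_square power3_eq_cube)
    qed
    ultimately show ?thesis by simp
  qed
  have g'_nonneg: "0 \<le> g' x" if "1 \<le> x" for x
    using that by (simp add: g'_def)
  have g'_nonpos: "g' x \<le> 0" if "x \<le> 1" for x
  proof -
    have "(x - 1) ^ 3 = (x - 1) * (x - 1)\<^sup>2" by (simp add: power3_eq_cube power2_eq_square)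
    also have "\<dots> \<le> 0" using that by (simp add: mult_nonpos_nonneg)
    finally show ?thesis by (simp add: g'_def divide_nonpos_nonneg)
  qed
  have "g 1 \<le> g t"
  proof (cases "1 \<le> t")
    case True
    show ?thesis
      by (rule deriv_nonneg_imp_mono[where a = 1 and b = t and g = g and g' = g'])
        (use True g'_nonneg in \<open>auto intro!: deriv\<close>)
  next
    case False
    show ?thesis
      by (rule deriv_nonpos_imp_antimono[where a = t and b = 1 and g = g and g' = g'])
        (use False t g'_nonpos in \<open>auto intro!: deriv\<close>)
  qed
  then show ?thesis by (simp add: g_def)
qed

lemma entropy_integrand_ge_quadratic:
  fixes t b :: real
  assumes t: "0 \<le> t"
  shows "b * (t - 1) - b\<^sup>2 * (t + 2) / 6 \<le> t * ln t - t + 1"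
proof (cases "t = 0")
  case True
  have "0 \<le> (b + 3 / 2)\<^sup>2 / 3" by simp
  then show ?thesis using True by (simp add: power2_eq_square algebra_simps)
next
  case False
  with t have tp: "0 < t" by simp
  have "0 \<le> (t + 2) / 6 * (b - 3 * (t - 1) / (t + 2))\<^sup>2" using tp by simp
  also have "\<dots> = 3 * (t - 1)\<^sup>2 / (2 * (t + 2)) - (b * (t - 1) - b\<^sup>2 * (t + 2) / 6)"
    using tp by (simp add: divide_simps power2_eq_square) (simp add: algebra_simps)
  finally have "b * (t - 1) - b\<^sup>2 * (t + 2) / 6 \<le> 3 * (t - 1)\<^sup>2 / (2 * (t + 2))" by simp
  also have "\<dots> = t * ((t - 1) * (5 * t + 1) / (2 * t * (t + 2))) - t + 1"
    using tp by (simp add: divide_simps power2_eq_square) (simp add: algebra_simps)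
  also have "\<dots> \<le> t * ln t - t + 1"
    using mult_left_mono[OF ln_ge_rational[OF tp], of t] tp by simp
  finally show ?thesis .
qed

lemma ennreal_integral_le_nn_integral:
  fixes f :: "'a \<Rightarrow> real"
  assumes f: "integrable M f"
  shows "ennreal (\<integral>x. f x \<partial>M) \<le> (\<integral>\<^sup>+x. ennreal (f x) \<partial>M)"
proof -
  have "(\<integral>x. f x \<partial>M) \<le> (\<integral>x. max 0 (f x) \<partial>M)"
    using f by (intro integral_mono) auto
  also have "\<dots> = enn2real (\<integral>\<^sup>+x. ennreal (max 0 (f x)) \<partial>M)"
    using f by (intro integral_eq_nn_integral) auto
  also have "(\<integral>\<^sup>+x. ennreal (max 0 (f x)) \<partial>M) = (\<integral>\<^sup>+x. ennreal (f x) \<partial>M)"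
    by (intro nn_integral_cong) simp
  finally have "ennreal (\<integral>x. f x \<partial>M) \<le> ennreal (enn2real (\<integral>\<^sup>+x. ennreal (f x) \<partial>M))"
    by (rule ennreal_leI)
  also have "\<dots> \<le> (\<integral>\<^sup>+x. ennreal (f x) \<partial>M)"
    by (simp add: ennreal_enn2real_if)
  finally show ?thesis .
qed

lemma (in sigma_finite_measure) ennreal_integral_le_nn_integral_iterated:
  fixes f :: "'b \<times> 'a \<Rightarrow> real"
  assumes f: "integrable (N \<Otimes>\<^sub>M M) f"
  shows "ennreal (\<integral>\<omega>. f \<omega> \<partial>(N \<Otimes>\<^sub>M M)) \<le> (\<integral>\<^sup>+x. (\<integral>\<^sup>+y. ennreal (f (x, y)) \<partial>M) \<partial>N)"
proof -
  have "(\<lambda>\<omega>. ennreal (f \<omega>)) \<in> borel_measurable (N \<Otimes>\<^sub>M M)"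
    using f by measurable
  then have "(\<integral>\<^sup>+x. (\<integral>\<^sup>+y. ennreal (f (x, y)) \<partial>M) \<partial>N) = (\<integral>\<^sup>+\<omega>. ennreal (f \<omega>) \<partial>(N \<Otimes>\<^sub>M M))"
    by (rule nn_integral_fst[of "\<lambda>\<omega>. ennreal (f \<omega>)", simplified])
  then show ?thesis using ennreal_integral_le_nn_integral[OF f] by simp
qed

lemma KL_div_ge_test_function:
  fixes P R :: "'a measure" and b :: "'a \<Rightarrow> real"
  assumes P: "prob_space P" and R: "prob_space R" and sets: "sets P = sets R"
    and b[measurable]: "b \<in> borel_measurable R" and bounded: "\<And>x. x \<in> space R \<Longrightarrow> \<bar>b x\<bar> \<le> B"
  shows "ennreal ((\<integral>x. b x \<partial>P) - (\<integral>x. b x \<partial>R)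
           - ((\<integral>x. (b x)\<^sup>2 \<partial>P) + 2 * (\<integral>x. (b x)\<^sup>2 \<partial>R)) / 6) \<le> KL_div P R"
proof (cases "absolutely_continuous R P")
  case False
  then show ?thesis by (simp add: KL_div_def)
next
  case ac: True
  interpret R: prob_space R by fact
  interpret P: prob_space P by fact
  define g where "g x = enn2real (RN_deriv R P x)" for x
  have g[measurable]: "g \<in> borel_measurable R" unfolding g_def by measurable
  have "AE x in R. RN_deriv R P x \<noteq> \<infinity>"
    using R.RN_deriv_finite[OF _ ac sets] P.sigma_finite_measure_axioms by blast
  then have "density R (\<lambda>x. ennreal (g x)) = density R (RN_deriv R P)"
    unfolding g_def by (intro density_cong) (auto simp: less_top)
  also have "\<dots> = P" using R.density_RN_deriv[OF ac sets] .
  finally have dens: "density R (\<lambda>x. ennreal (g x)) = P" .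
  have space: "space P = space R" using sets by (rule sets_eq_imp_space_eq)
  have change_density: "(\<integral>x. h x \<partial>P) = (\<integral>x. g x * h x \<partial>R)" "integrable R (\<lambda>x. g x * h x)"
    "integrable R h"
    if [measurable]: "h \<in> borel_measurable R" and "\<And>x. x \<in> space R \<Longrightarrow> \<bar>h x\<bar> \<le> C"
    for h :: "'a \<Rightarrow> real" and C
  proof -
    have "h \<in> borel_measurable P" using that(1) measurable_cong_sets[OF sets refl] by blast
    then have "integrable P h"
      using that(2) space by (intro P.integrable_const_bound[where B = C]) auto
    then show "(\<integral>x. h x \<partial>P) = (\<integral>x. g x * h x \<partial>R)" "integrable R (\<lambda>x. g x * h x)"
      using integral_density[OF that(1) g] integrable_density[OF that(1) g] dens
      by (simp_all add: g_def)
    show "integrable R h" using that by (intro R.integrable_const_bound[where B = C]) auto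
  qed
  have bounded2: "\<bar>(b x)\<^sup>2\<bar> \<le> B\<^sup>2" if "x \<in> space R" for x
    using power_mono[OF bounded[OF that] abs_ge_zero, of 2] by simp
  note b1 = change_density[of b B, OF b bounded]
  note b2 = change_density[of "\<lambda>x. (b x)\<^sup>2" "B\<^sup>2", OF _ bounded2, simplified]
  define r where "r x = g x * b x - b x - (g x * (b x)\<^sup>2 + 2 * (b x)\<^sup>2) / 6" for x
  have "(\<integral>x. b x \<partial>P) - (\<integral>x. b x \<partial>R) - ((\<integral>x. (b x)\<^sup>2 \<partial>P) + 2 * (\<integral>x. (b x)\<^sup>2 \<partial>R)) / 6
      = (\<integral>x. r x \<partial>R)"
    unfolding r_def using b1 b2 by simp
  moreover have "integrable R r" unfolding r_def using b1 b2 by auto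
  then have "ennreal (\<integral>x. r x \<partial>R) \<le> (\<integral>\<^sup>+x. ennreal (r x) \<partial>R)"
    by (rule ennreal_integral_le_nn_integral)
  also have "\<dots> \<le> (\<integral>\<^sup>+x. ennreal (g x * ln (g x) - g x + 1) \<partial>R)"
  proof (intro nn_integral_mono ennreal_leI)
    fix x
    have "b x * (g x - 1) - (b x)\<^sup>2 * (g x + 2) / 6 \<le> g x * ln (g x) - g x + 1"
      by (rule entropy_integrand_ge_quadratic) (simp add: g_def)
    then show "r x \<le> g x * ln (g x) - g x + 1" unfolding r_def by (simp add: algebra_simps)
  qed
  also have "\<dots> = KL_div P R" using ac by (simp add: KL_div_def g_def Let_def)
  finally show ?thesis by simp
qed

lemma integral_indicator_shift:
  assumes "prob_space M" "A \<in> sets M"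
  shows "(\<integral>x. c * (indicator A x - 1 / 2) \<partial>M) = c * (measure M A - 1 / 2)"
proof -
  interpret prob_space M by fact
  have "integrable M (indicator A :: _ \<Rightarrow> real)"
    using assms(2) by (intro integrable_real_indicator) (auto simp: less_top[symmetric])
  then show ?thesis using assms(2) by (simp add: prob_space)
qed

lemma KL_div_ge_set_deviation:
  fixes P R :: "'a measure"
  assumes P: "prob_space P" and R: "prob_space R" and sets: "sets P = sets R" and A: "A \<in> sets R"
  shows "ennreal (c * (measure P A - measure R A) - c\<^sup>2 / 8) \<le> KL_div P R"
proof -
  define b where "b x = c * (indicator A x - 1 / 2)" for x :: 'a
  have "b \<in> borel_measurable R" unfolding b_def using A by measurable
  moreover have "\<bar>b x\<bar> \<le> \<bar>c\<bar>" for x unfolding b_def by (simp add: abs_mult split: split_indicator)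
  moreover have "(\<integral>x. b x \<partial>P) - (\<integral>x. b x \<partial>R)
      - ((\<integral>x. (b x)\<^sup>2 \<partial>P) + 2 * (\<integral>x. (b x)\<^sup>2 \<partial>R)) / 6
      = c * (measure P A - measure R A) - c\<^sup>2 / 8"
  proof -
    have "(\<lambda>x. (b x)\<^sup>2) = (\<lambda>_. c\<^sup>2 / 4)"
      unfolding b_def by (rule ext) (simp split: split_indicator add: power2_eq_square)
    then have sq: "(\<integral>x. (b x)\<^sup>2 \<partial>P) = c\<^sup>2 / 4" "(\<integral>x. (b x)\<^sup>2 \<partial>R) = c\<^sup>2 / 4"
      using prob_space.prob_space[OF P] prob_space.prob_space[OF R] by simp_all
    have "(\<integral>x. b x \<partial>P) = c * (measure P A - 1 / 2)" "(\<integral>x. b x \<partial>R) = c * (measure R A - 1 / 2)"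
      unfolding b_def using integral_indicator_shift P R A sets by auto
    then show ?thesis unfolding sq by (simp add: algebra_simps)
  qed
  ultimately show ?thesis using KL_div_ge_test_function[OF P R sets, of b "\<bar>c\<bar>"] by simp
qed

lemma abs_le_sqrt_if_quadratic_bound:
  fixes d \<delta> :: real
  assumes "\<And>c. c * d - c\<^sup>2 / 8 \<le> \<delta>"
  shows "\<bar>d\<bar> \<le> sqrt (\<delta> / 2)"
proof -
  have "(4 * d) * d - (4 * d)\<^sup>2 / 8 \<le> \<delta>" by (rule assms)
  then have "d\<^sup>2 \<le> \<delta> / 2" by (simp add: power2_eq_square algebra_simps)
  then have "sqrt (d\<^sup>2) \<le> sqrt (\<delta> / 2)" by (rule real_sqrt_le_mono)
  then show ?thesis by simp
qed

lemma abs_measure_diff_le_TV: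
  assumes "prob_space P" "prob_space R" "A \<in> sets P"
  shows "\<bar>measure P A - measure R A\<bar> \<le> TV P R"
  unfolding TV_def
proof (rule cSUP_upper[OF assms(3)])
  have "\<bar>measure P B - measure R B\<bar> \<le> 1" for B
    using prob_space.prob_le_1[OF assms(1), of B] prob_space.prob_le_1[OF assms(2), of B]
      measure_nonneg[of P B] measure_nonneg[of R B] by (simp only: abs_le_iff) linarith
  then show "bdd_above ((\<lambda>A. \<bar>measure P A - measure R A\<bar>) ` sets P)" by (rule bdd_aboveI2)
qed

lemma TV_le:
  assumes "\<And>A. A \<in> sets P \<Longrightarrow> \<bar>measure P A - measure R A\<bar> \<le> c"
  shows "TV P R \<le> c"
  unfolding TV_def using assms sets.empty_sets by (intro cSUP_least) auto

lemma
  fixes M N :: "'a measure"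
  assumes M: "prob_space M" and N: "prob_space N" and sets: "sets N = sets M"
    and a: "0 \<le> a" "a \<le> 1"
  shows sets_mix_measure: "sets (mix_measure a M N) = sets M"
    and prob_space_mix_measure: "prob_space (mix_measure a M N)"
proof -
  interpret M: prob_space M by fact
  interpret N: prob_space N by fact
  have sa: "sigma_algebra (space M) (sets M)" by (rule sets.sigma_algebra_axioms)
  show "sets (mix_measure a M N) = sets M"
    unfolding mix_measure_def by (rule sigma_algebra.sets_measure_of_eq[OF sa])
  have space: "space (mix_measure a M N) = space M"
    unfolding mix_measure_def by (rule sigma_algebra.space_measure_of_eq[OF sa])
  define \<mu> where "\<mu> A = ennreal (1 - a) * emeasure M A + ennreal a * emeasure N A" for A
  have "countably_additive (sets M) \<mu>"
  proof (unfold countably_additive_def, intro allI impI)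
    fix A :: "nat \<Rightarrow> 'a set" assume A: "range A \<subseteq> sets M" "disjoint_family A"
    have AN: "range A \<subseteq> sets N" using A sets by simp
    have "(\<Sum>i. \<mu> (A i)) = (\<Sum>i. ennreal (1 - a) * emeasure M (A i)) + (\<Sum>i. ennreal a * emeasure N (A i))"
      unfolding \<mu>_def by (rule suminf_add[symmetric]) auto
    also have "\<dots> = \<mu> (\<Union>i. A i)"
      unfolding \<mu>_def ennreal_suminf_cmult suminf_emeasure[OF A] suminf_emeasure[OF AN A(2)] ..
    finally show "(\<Sum>i. \<mu> (A i)) = \<mu> (\<Union>i. A i)" .
  qed
  moreover have "positive (sets M) \<mu>" unfolding positive_def \<mu>_def by simp
  ultimately have "emeasure (mix_measure a M N) (space M) = \<mu> (space M)"
    unfolding mix_measure_def \<mu>_def[symmetric] by (intro emeasure_measure_of_sigma[OF sa]) auto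
  also have "\<dots> = ennreal (1 - a) + ennreal a"
    using sets_eq_imp_space_eq[OF sets] M.emeasure_space_1 N.emeasure_space_1 by (simp add: \<mu>_def)
  also have "\<dots> = 1" using a by (simp add: ennreal_plus[symmetric] del: ennreal_plus)
  finally show "prob_space (mix_measure a M N)" by (intro prob_spaceI) (simp add: space)
qed

lemma measurable_prob_algebra_prob_space:
  assumes "Q \<in> M \<rightarrow>\<^sub>M prob_algebra K" and "x \<in> space M"
  shows "prob_space (Q x)" "sets (Q x) = sets K"
  using measurable_space[OF assms] by (auto simp: space_prob_algebra)

lemma integrable_measure_kernel:
  assumes "finite_measure M" and Q: "Q \<in> M \<rightarrow>\<^sub>M prob_algebra K" and A: "A \<in> sets K"
  shows "integrable M (\<lambda>\<omega>. measure (Q \<omega>) A)"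
proof (rule finite_measure.integrable_const_bound[OF assms(1) AE_I2])
  show "(\<lambda>\<omega>. measure (Q \<omega>) A) \<in> borel_measurable M"
    by (rule measurable_compose[OF Q measurable_measure_prob_algebra[OF A]])
  show "norm (measure (Q \<omega>) A) \<le> 1" if "\<omega> \<in> space M" for \<omega>
    using prob_space.prob_le_1[OF measurable_prob_algebra_prob_space(1)[OF Q that]] by simp
qed

lemma
  fixes Q :: "'h \<times> 'x \<Rightarrow> 'y measure"
  assumes Q: "Q \<in> MH \<Otimes>\<^sub>M N \<rightarrow>\<^sub>M prob_algebra K"
    and P: "prob_space P" "sets P = sets MH" and p: "prob_space p" "sets p = sets N"
  shows measurable_pred_kernel: "Q \<in> P \<Otimes>\<^sub>M p \<rightarrow>\<^sub>M prob_algebra K"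
    and prob_space_pred_law: "prob_space (pred_law P p Q)"
    and sets_pred_law: "sets (pred_law P p Q) = sets K"
    and measure_pred_law:
      "A \<in> sets K \<Longrightarrow> measure (pred_law P p Q) A = (\<integral>\<omega>. measure (Q \<omega>) A \<partial>(P \<Otimes>\<^sub>M p))"
proof -
  interpret Pp: pair_prob_space P p
    using P p by (simp add: pair_prob_space_def pair_sigma_finite_def prob_space_imp_sigma_finite)
  have "sets (P \<Otimes>\<^sub>M p) = sets (MH \<Otimes>\<^sub>M N)"
    by (rule sets_pair_measure_cong) (use P p in auto)
  then show Q': "Q \<in> P \<Otimes>\<^sub>M p \<rightarrow>\<^sub>M prob_algebra K"
    using Q measurable_cong_sets by blast
  have Qs: "Q \<in> P \<Otimes>\<^sub>M p \<rightarrow>\<^sub>M subprob_algebra K" by (rule measurable_prob_algebraD[OF Q'])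
  show "prob_space (pred_law P p Q)"
    unfolding pred_law_def
    by (rule Pp.prob_space_bind[OF _ Qs]) (use measurable_prob_algebra_prob_space(1)[OF Q'] in auto)
  show "sets (pred_law P p Q) = sets K"
    unfolding pred_law_def
    by (rule sets_bind) (use measurable_prob_algebra_prob_space(2)[OF Q'] Pp.not_empty in auto)
  show "measure (pred_law P p Q) A = (\<integral>\<omega>. measure (Q \<omega>) A \<partial>(P \<Otimes>\<^sub>M p))" if "A \<in> sets K"
    unfolding pred_law_def by (rule Pp.measure_bind[OF Qs that])
qed

lemma pred_law_deviation_le_sqrt_regret:
  fixes Q :: "'h \<times> 'x \<Rightarrow> 'y measure" and \<eta> :: "'x \<Rightarrow> 'y measure"
  assumes Q: "Q \<in> MH \<Otimes>\<^sub>M N \<rightarrow>\<^sub>M prob_algebra K"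
    and \<eta>: "\<eta> \<in> N \<rightarrow>\<^sub>M prob_algebra K"
    and P: "prob_space P" "sets P = sets MH" and p: "prob_space p" "sets p = sets N"
    and reg: "avg_reg_log P p \<eta> Q \<le> ennreal \<delta>" and \<delta>: "0 \<le> \<delta>" and A: "A \<in> sets K"
  shows "\<bar>(\<integral>x. measure (\<eta> x) A \<partial>p) - measure (pred_law P p Q) A\<bar> \<le> sqrt (\<delta> / 2)"
proof (rule abs_le_sqrt_if_quadratic_bound)
  fix c :: real
  interpret Pp: pair_prob_space P p
    using P p by (simp add: pair_prob_space_def pair_sigma_finite_def prob_space_imp_sigma_finite)
  have Q': "Q \<in> P \<Otimes>\<^sub>M p \<rightarrow>\<^sub>M prob_algebra K" by (rule measurable_pred_kernel[OF Q P p])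
  have \<eta>': "\<eta> \<in> p \<rightarrow>\<^sub>M prob_algebra K" using \<eta> measurable_cong_sets[OF p(2) refl] by blast
  have kernels: "prob_space (\<eta> x)" "sets (\<eta> x) = sets K" "prob_space (Q (\<theta>, x))" "sets (Q (\<theta>, x)) = sets K"
    if "\<theta> \<in> space P" "x \<in> space p" for \<theta> x
    using measurable_prob_algebra_prob_space[OF \<eta>' that(2)]
      measurable_prob_algebra_prob_space[OF Q', of "(\<theta>, x)"] that
    by (simp_all add: space_pair_measure)
  define f where "f \<omega> = c * (measure (\<eta> (snd \<omega>)) A - measure (Q \<omega>) A) - c\<^sup>2 / 8" for \<omega>
  have int: "integrable (P \<Otimes>\<^sub>M p) (\<lambda>\<omega>. measure (\<eta> (snd \<omega>)) A)"
      "integrable (P \<Otimes>\<^sub>M p) (\<lambda>\<omega>. measure (Q \<omega>) A)"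
    using integrable_measure_kernel[OF Pp.P.finite_measure_axioms _ A]
      measurable_compose[OF measurable_snd \<eta>'] Q' by auto
  have "(\<integral>\<omega>. measure (\<eta> (snd \<omega>)) A \<partial>(P \<Otimes>\<^sub>M p)) = (\<integral>x. measure (\<eta> x) A \<partial>p)"
    using Pp.integral_fst'[OF int(1)] by (simp add: Pp.M1.prob_space)
  then have "c * ((\<integral>x. measure (\<eta> x) A \<partial>p) - measure (pred_law P p Q) A) - c\<^sup>2 / 8
      = (\<integral>\<omega>. f \<omega> \<partial>(P \<Otimes>\<^sub>M p))"
    using int by (simp add: f_def measure_pred_law[OF Q P p A] Pp.P.prob_space algebra_simps)
  also have "ennreal \<dots> \<le> (\<integral>\<^sup>+\<theta>. (\<integral>\<^sup>+x. ennreal (f (\<theta>, x)) \<partial>p) \<partial>P)"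
    by (rule Pp.M2.ennreal_integral_le_nn_integral_iterated) (use int in \<open>simp add: f_def\<close>)
  also have "\<dots> \<le> avg_reg_log P p \<eta> Q"
    unfolding avg_reg_log_def
  proof (intro nn_integral_mono)
    fix \<theta> x assume "\<theta> \<in> space P" "x \<in> space p"
    then show "ennreal (f (\<theta>, x)) \<le> KL_div (\<eta> x) (Q (\<theta>, x))"
      using KL_div_ge_set_deviation[of "\<eta> x" "Q (\<theta>, x)" A c] kernels A by (simp add: f_def)
  qed
  also note reg
  finally show "c * ((\<integral>x. measure (\<eta> x) A \<partial>p) - measure (pred_law P p Q) A) - c\<^sup>2 / 8 \<le> \<delta>"
    using \<delta> by (simp add: ennreal_le_iff)
qed

lemma (in pair_prob_space) integral_pair_mult:
  fixes f :: "'a \<Rightarrow> real" and g :: "'b \<Rightarrow> real"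
  assumes [measurable]: "f \<in> borel_measurable M1" "g \<in> borel_measurable M2"
    and "\<And>x. \<bar>f x\<bar> \<le> B" "\<And>y. \<bar>g y\<bar> \<le> C"
  shows "(\<integral>\<omega>. f (fst \<omega>) * g (snd \<omega>) \<partial>(M1 \<Otimes>\<^sub>M M2)) = (\<integral>x. f x \<partial>M1) * (\<integral>y. g y \<partial>M2)"
proof -
  have "\<bar>f (fst \<omega>) * g (snd \<omega>)\<bar> \<le> B * C" for \<omega>
    using assms(3,4) by (simp add: abs_mult mult_mono')
  then have "integrable (M1 \<Otimes>\<^sub>M M2) (\<lambda>\<omega>. f (fst \<omega>) * g (snd \<omega>))"
    by (intro P.integrable_const_bound[where B = "B * C"]) auto
  then show ?thesis by (simp flip: integral_fst')
qed

definition labelled_mixture :: "real \<Rightarrow> (bool \<Rightarrow> 'y measure) \<Rightarrow> 'y measure \<Rightarrow> ('y \<times> bool) measure"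
  where "labelled_mixture \<pi> \<mu> K = measure_pmf (bernoulli_pmf \<pi>) \<bind>
    (\<lambda>z. distr (\<mu> z) (K \<Otimes>\<^sub>M count_space UNIV) (\<lambda>y. (y, z)))"

lemma
  fixes \<mu> :: "bool \<Rightarrow> 'y measure"
  assumes \<mu>: "\<And>z. prob_space (\<mu> z)" "\<And>z. sets (\<mu> z) = sets K" and \<pi>: "0 \<le> \<pi>" "\<pi> \<le> 1"
  shows prob_space_labelled_mixture: "prob_space (labelled_mixture \<pi> \<mu> K)"
    and sets_labelled_mixture: "sets (labelled_mixture \<pi> \<mu> K) = sets (K \<Otimes>\<^sub>M count_space UNIV)"
    and integral_labelled_mixture: "\<And>h B. h \<in> borel_measurable (K \<Otimes>\<^sub>M count_space UNIV) \<Longrightarrow>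
      (\<And>\<omega>. \<bar>h \<omega>\<bar> \<le> B) \<Longrightarrow> (\<integral>\<omega>. h \<omega> \<partial>labelled_mixture \<pi> \<mu> K)
        = \<pi> * (\<integral>y. h (y, True) \<partial>\<mu> True) + (1 - \<pi>) * (\<integral>y. h (y, False) \<partial>\<mu> False)"
proof -
  define N where "N z = distr (\<mu> z) (K \<Otimes>\<^sub>M count_space UNIV) (\<lambda>y. (y, z))" for z
  have pair: "(\<lambda>y. (y, z)) \<in> \<mu> z \<rightarrow>\<^sub>M K \<Otimes>\<^sub>M count_space UNIV" for z
    by (rule measurable_Pair) (auto simp: measurable_cong_sets[OF \<mu>(2) refl])
  have N: "prob_space (N z)" "sets (N z) = sets (K \<Otimes>\<^sub>M count_space UNIV)" for z
    unfolding N_def using prob_space.prob_space_distr[OF \<mu>(1) pair] by auto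
  have "N \<in> measure_pmf (bernoulli_pmf \<pi>) \<rightarrow>\<^sub>M prob_algebra (K \<Otimes>\<^sub>M count_space UNIV)"
    using N by (auto simp: space_prob_algebra)
  then have N_measurable: "N \<in> measure_pmf (bernoulli_pmf \<pi>) \<rightarrow>\<^sub>M subprob_algebra (K \<Otimes>\<^sub>M count_space UNIV)"
    by (rule measurable_prob_algebraD)
  have L: "labelled_mixture \<pi> \<mu> K = measure_pmf (bernoulli_pmf \<pi>) \<bind> N"
    unfolding labelled_mixture_def N_def ..
  show "prob_space (labelled_mixture \<pi> \<mu> K)"
    unfolding L by (rule measure_pmf.prob_space_bind[OF _ N_measurable]) (use N in auto)
  show "sets (labelled_mixture \<pi> \<mu> K) = sets (K \<Otimes>\<^sub>M count_space UNIV)"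
    unfolding L by (rule sets_bind) (use N in auto)
  fix h :: "'y \<times> bool \<Rightarrow> real" and B
  assume h: "h \<in> borel_measurable (K \<Otimes>\<^sub>M count_space UNIV)" and bounded: "\<And>\<omega>. \<bar>h \<omega>\<bar> \<le> B"
  have "(\<integral>\<omega>. h \<omega> \<partial>labelled_mixture \<pi> \<mu> K) = (\<integral>z. (\<integral>\<omega>. h \<omega> \<partial>N z) \<partial>measure_pmf (bernoulli_pmf \<pi>))"
    unfolding L
    by (rule integral_bind[OF h _ N_measurable, where B = B and B' = 1])
      (use bounded N in \<open>auto intro!: prob_space_imp_subprob_space
        simp: prob_space.emeasure_space_1 measure_pmf.finite_measure_axioms\<close>)
  also have "\<dots> = (\<integral>z. (\<integral>y. h (y, z) \<partial>\<mu> z) \<partial>measure_pmf (bernoulli_pmf \<pi>))"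
    unfolding N_def by (subst integral_distr[OF pair h]) simp
  finally show "(\<integral>\<omega>. h \<omega> \<partial>labelled_mixture \<pi> \<mu> K)
      = \<pi> * (\<integral>y. h (y, True) \<partial>\<mu> True) + (1 - \<pi>) * (\<integral>y. h (y, False) \<partial>\<mu> False)"
    using \<pi> by (simp add: algebra_simps)
qed

lemma integral_label_labelled_mixture:
  fixes \<mu> :: "bool \<Rightarrow> 'y measure" and g :: "bool \<Rightarrow> real"
  assumes \<mu>: "\<And>z. prob_space (\<mu> z)" "\<And>z. sets (\<mu> z) = sets K" and \<pi>: "0 \<le> \<pi>" "\<pi> \<le> 1"
  shows "(\<integral>z. g z \<partial>distr (labelled_mixture \<pi> \<mu> K) (count_space UNIV) snd) = \<pi> * g True + (1 - \<pi>) * g False"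
proof -
  have "snd \<in> labelled_mixture \<pi> \<mu> K \<rightarrow>\<^sub>M count_space UNIV"
    using measurable_cong_sets[OF sets_labelled_mixture[of \<mu> K, OF \<mu> \<pi>] refl] by auto
  then have "(\<integral>z. g z \<partial>distr (labelled_mixture \<pi> \<mu> K) (count_space UNIV) snd)
      = (\<integral>\<omega>. g (snd \<omega>) \<partial>labelled_mixture \<pi> \<mu> K)"
    by (rule integral_distr) simp
  also have "\<dots> = \<pi> * g True + (1 - \<pi>) * g False"
  proof -
    have "\<bar>g z\<bar> \<le> \<bar>g True\<bar> + \<bar>g False\<bar>" for z by (cases z) auto
    then show ?thesis
      by (subst integral_labelled_mixture[of \<mu> K, OF \<mu> \<pi>, of _ "\<bar>g True\<bar> + \<bar>g False\<bar>"])
        (auto simp: prob_space.prob_space[OF \<mu>(1)])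
  qed
  finally show ?thesis .
qed

lemma
  assumes "prob_space J" "sets J = sets (K \<Otimes>\<^sub>M L)"
  shows pair_prob_space_marginals: "pair_prob_space (distr J K fst) (distr J L snd)"
    and sets_pair_marginals: "sets (distr J K fst \<Otimes>\<^sub>M distr J L snd) = sets (K \<Otimes>\<^sub>M L)"
proof -
  have "fst \<in> J \<rightarrow>\<^sub>M K" "snd \<in> J \<rightarrow>\<^sub>M L"
    using measurable_cong_sets[OF assms(2) refl] by auto
  then have "prob_space (distr J K fst)" "prob_space (distr J L snd)"
    by (auto intro: prob_space.prob_space_distr[OF assms(1)])
  then show "pair_prob_space (distr J K fst) (distr J L snd)"
    by (simp add: pair_prob_space_def pair_sigma_finite_def prob_space_imp_sigma_finite)
  show "sets (distr J K fst \<Otimes>\<^sub>M distr J L snd) = sets (K \<Otimes>\<^sub>M L)"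
    by (rule sets_pair_measure_cong) simp_all
qed

lemma mutual_info_labelled_mixture_ge_test_function:
  fixes \<mu> :: "bool \<Rightarrow> 'y measure" and c :: "bool \<Rightarrow> real"
  assumes \<mu>: "\<And>z. prob_space (\<mu> z)" "\<And>z. sets (\<mu> z) = sets K"
    and \<pi>: "0 \<le> \<pi>" "\<pi> \<le> 1" and A: "A \<in> sets K"
    and c_mean: "\<pi> * c True + (1 - \<pi>) * c False = 0"
  shows "ennreal (\<pi> * c True * measure (\<mu> True) A + (1 - \<pi>) * c False * measure (\<mu> False) A
      - (\<pi> * (c True)\<^sup>2 + (1 - \<pi>) * (c False)\<^sup>2) / 8)
    \<le> mutual_info K (count_space UNIV) (labelled_mixture \<pi> \<mu> K)"
proof -
  define J where "J = labelled_mixture \<pi> \<mu> K"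
  define JY where "JY = distr J K fst"
  define JZ where "JZ = distr J (count_space UNIV) snd"
  define M where "M = JY \<Otimes>\<^sub>M JZ"
  have J: "prob_space J" "sets J = sets (K \<Otimes>\<^sub>M count_space UNIV)"
    unfolding J_def by (rule prob_space_labelled_mixture[of \<mu> K, OF \<mu> \<pi>]
        sets_labelled_mixture[of \<mu> K, OF \<mu> \<pi>])+
  note J_integral = integral_labelled_mixture[of \<mu> K, OF \<mu> \<pi>, folded J_def]
  note JZ_integral = integral_label_labelled_mixture[of \<mu> K, OF \<mu> \<pi>, folded J_def JZ_def]
  interpret M: pair_prob_space JY JZ
    unfolding JY_def JZ_def by (rule pair_prob_space_marginals[OF J])
  have M_sets: "sets M = sets J" using sets_pair_marginals[OF J] J(2) by (simp add: M_def JY_def JZ_def)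
  define k :: "'y \<Rightarrow> real" where "k y = indicator A y - 1 / 2" for y
  define b where "b \<omega> = k (fst \<omega>) * c (snd \<omega>)" for \<omega>
  have k_measurable[measurable]: "k \<in> borel_measurable K" unfolding k_def using A by measurable
  have k_bounded: "\<bar>k y\<bar> \<le> 1" for y unfolding k_def by (simp split: split_indicator)
  have c_bounded: "\<bar>c z\<bar> \<le> \<bar>c True\<bar> + \<bar>c False\<bar>" "\<bar>(c z)\<^sup>2 / 4\<bar> \<le> (c True)\<^sup>2 + (c False)\<^sup>2" for z
    by (cases z; simp)+
  have "b \<in> borel_measurable (K \<Otimes>\<^sub>M count_space UNIV)" unfolding b_def
    by (intro borel_measurable_times measurable_compose[OF measurable_fst k_measurable]
        measurable_compose[OF measurable_snd]) simp
  then have b_measurable: "b \<in> borel_measurable J" using measurable_cong_sets[OF J(2) refl] by blast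
  have b_bounded: "\<bar>b \<omega>\<bar> \<le> \<bar>c True\<bar> + \<bar>c False\<bar>" for \<omega>
    using mult_mono'[OF k_bounded c_bounded(1)] by (simp add: b_def abs_mult)
  have b_sq: "(\<lambda>\<omega>. (b \<omega>)\<^sup>2) = (\<lambda>\<omega>. 1 * ((c (snd \<omega>))\<^sup>2 / 4))"
    by (rule ext) (simp add: b_def k_def power2_eq_square split: split_indicator)
  have k_integral: "(\<integral>y. k y \<partial>\<mu> z) = measure (\<mu> z) A - 1 / 2" for z
    using integral_indicator_shift[of "\<mu> z" A 1] \<mu> A by (simp add: k_def)
  have "integral\<^sup>L J b = \<pi> * c True * measure (\<mu> True) A + (1 - \<pi>) * c False * measure (\<mu> False) A
      - (\<pi> * c True + (1 - \<pi>) * c False) / 2"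
    using b_measurable J(2) by (simp add: J_integral[OF _ b_bounded] b_def k_integral field_simps)
  then have "integral\<^sup>L J b = \<pi> * c True * measure (\<mu> True) A + (1 - \<pi>) * c False * measure (\<mu> False) A"
    unfolding c_mean by simp
  moreover have "integral\<^sup>L M b = (\<integral>y. k y \<partial>JY) * (\<integral>z. c z \<partial>JZ)"
    unfolding M_def b_def
    by (rule M.integral_pair_mult[OF _ _ k_bounded c_bounded(1)]) (simp_all add: JY_def JZ_def)
  then have "integral\<^sup>L M b = 0" by (simp add: JZ_integral c_mean)
  moreover have "(\<integral>z. (c z)\<^sup>2 / 4 \<partial>JZ) = (\<pi> * (c True)\<^sup>2 + (1 - \<pi>) * (c False)\<^sup>2) / 4"
    by (simp add: JZ_integral add_divide_distrib)
  moreover have "(\<integral>\<omega>. (b \<omega>)\<^sup>2 \<partial>J) = (\<integral>z. (c z)\<^sup>2 / 4 \<partial>JZ)"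
    unfolding b_sq JZ_def using measurable_cong_sets[OF J(2) refl]
    by (subst integral_distr) auto
  moreover have "(\<integral>\<omega>. (b \<omega>)\<^sup>2 \<partial>M) = (\<integral>z. (c z)\<^sup>2 / 4 \<partial>JZ)"
    unfolding b_sq M_def
    using M.integral_pair_mult[where f = "\<lambda>_. 1" and B = 1, OF _ _ _ c_bounded(2)]
    by (simp add: M.M1.prob_space JZ_def)
  ultimately have "integral\<^sup>L J b - integral\<^sup>L M b
      - ((\<integral>\<omega>. (b \<omega>)\<^sup>2 \<partial>J) + 2 * (\<integral>\<omega>. (b \<omega>)\<^sup>2 \<partial>M)) / 6
    = \<pi> * c True * measure (\<mu> True) A + (1 - \<pi>) * c False * measure (\<mu> False) A
      - (\<pi> * (c True)\<^sup>2 + (1 - \<pi>) * (c False)\<^sup>2) / 8"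
    by simp
  moreover have "ennreal (integral\<^sup>L J b - integral\<^sup>L M b
      - ((\<integral>\<omega>. (b \<omega>)\<^sup>2 \<partial>J) + 2 * (\<integral>\<omega>. (b \<omega>)\<^sup>2 \<partial>M)) / 6) \<le> KL_div J M"
    using b_measurable b_bounded M_sets measurable_cong_sets[OF M_sets refl]
    by (intro KL_div_ge_test_function[OF J(1) M.P.prob_space_axioms[folded M_def]]) auto
  ultimately show ?thesis by (simp add: mutual_info_def J_def JY_def JZ_def M_def)
qed

lemma mutual_info_labelled_mixture_ge:
  fixes \<mu> :: "bool \<Rightarrow> 'y measure"
  assumes \<mu>: "\<And>z. prob_space (\<mu> z)" "\<And>z. sets (\<mu> z) = sets K"
    and \<pi>: "0 \<le> \<pi>" "\<pi> \<le> 1" and A: "A \<in> sets K"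
  shows "ennreal (2 * \<pi> * (1 - \<pi>) * (measure (\<mu> True) A - measure (\<mu> False) A)\<^sup>2)
    \<le> mutual_info K (count_space UNIV) (labelled_mixture \<pi> \<mu> K)"
proof -
  define T where "T = measure (\<mu> True) A - measure (\<mu> False) A"
  define c where "c z = (if z then 4 * (1 - \<pi>) * T else - 4 * \<pi> * T)" for z
  have "\<pi> * c True + (1 - \<pi>) * c False = 0" by (simp add: c_def algebra_simps)
  then have "ennreal (\<pi> * c True * measure (\<mu> True) A + (1 - \<pi>) * c False * measure (\<mu> False) A
      - (\<pi> * (c True)\<^sup>2 + (1 - \<pi>) * (c False)\<^sup>2) / 8)
    \<le> mutual_info K (count_space UNIV) (labelled_mixture \<pi> \<mu> K)"
    by (rule mutual_info_labelled_mixture_ge_test_function[OF \<mu> \<pi> A])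
  moreover have "\<pi> * c True * measure (\<mu> True) A + (1 - \<pi>) * c False * measure (\<mu> False) A
      - (\<pi> * (c True)\<^sup>2 + (1 - \<pi>) * (c False)\<^sup>2) / 8 = 2 * \<pi> * (1 - \<pi>) * T\<^sup>2"
    unfolding c_def T_def if_True if_False power2_eq_square by algebra
  ultimately show ?thesis unfolding T_def by simp
qed

lemma pred_law_deviation_le_sqrt_mutual_info:
  fixes Q :: "'h \<times> 'x \<Rightarrow> 'y measure"
  assumes Q: "Q \<in> MH \<Otimes>\<^sub>M N \<rightarrow>\<^sub>M prob_algebra K"
    and P: "prob_space P" "sets P = sets MH"
    and p1: "prob_space p1" "sets p1 = sets N" and p0: "prob_space p0" "sets p0 = sets N"
    and \<pi>: "0 < \<pi>" "\<pi> < 1" and \<epsilon>: "0 \<le> \<epsilon>"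
    and mi: "mutual_info K (count_space UNIV) (margin_joint \<pi> P p1 p0 K Q) \<le> ennreal \<epsilon>"
    and A: "A \<in> sets K"
  shows "\<bar>measure (pred_law P p1 Q) A - measure (pred_law P p0 Q) A\<bar> \<le> sqrt (\<epsilon> / (2 * \<pi> * (1 - \<pi>)))"
proof -
  define \<mu> where "\<mu> z = pred_law P (if z then p1 else p0) Q" for z
  have "prob_space (\<mu> z)" "sets (\<mu> z) = sets K" for z
    unfolding \<mu>_def using prob_space_pred_law[OF Q P] sets_pred_law[OF Q P] p1 p0 by auto
  with \<pi> A have "ennreal (2 * \<pi> * (1 - \<pi>) * (measure (\<mu> True) A - measure (\<mu> False) A)\<^sup>2)
      \<le> mutual_info K (count_space UNIV) (labelled_mixture \<pi> \<mu> K)"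
    by (intro mutual_info_labelled_mixture_ge) auto
  also have "labelled_mixture \<pi> \<mu> K = margin_joint \<pi> P p1 p0 K Q"
    by (simp add: margin_joint_def labelled_mixture_def \<mu>_def)
  also note mi
  finally have "ennreal (2 * \<pi> * (1 - \<pi>) * (measure (\<mu> True) A - measure (\<mu> False) A)\<^sup>2) \<le> ennreal \<epsilon>" .
  then have "(measure (\<mu> True) A - measure (\<mu> False) A)\<^sup>2 \<le> \<epsilon> / (2 * \<pi> * (1 - \<pi>))"
    using \<pi> \<epsilon> by (simp add: field_simps)
  then have "sqrt ((measure (\<mu> True) A - measure (\<mu> False) A)\<^sup>2) \<le> sqrt (\<epsilon> / (2 * \<pi> * (1 - \<pi>)))"
    by (rule real_sqrt_le_mono)
  then show ?thesis by (simp add: \<mu>_def)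
qed

theorem mainTheorem2:
  fixes pr pu :: "('x::polish_space) measure"
    and \<eta> :: "'x \<Rightarrow> ('y::polish_space) measure"
    and MH :: "'h measure"
    and Q :: "'h \<times> 'x \<Rightarrow> 'y measure"
    and Pu Pr :: "'h measure"
    and \<alpha> \<pi> \<delta> \<delta>g \<epsilon>u :: real
  assumes pr: "prob_space pr" "sets pr = sets (borel :: 'x measure)"
    and pu: "prob_space pu" "sets pu = sets (borel :: 'x measure)"
    and eta: "\<eta> \<in> (borel :: 'x measure) \<rightarrow>\<^sub>M prob_algebra (borel :: 'y measure)"
    and alpha: "0 < \<alpha>" "\<alpha> \<le> 1"
    and Q: "Q \<in> MH \<Otimes>\<^sub>M (borel :: 'x measure) \<rightarrow>\<^sub>M prob_algebra (borel :: 'y measure)"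
    and Pu: "prob_space Pu" "sets Pu = sets MH"
    and Pr: "prob_space Pr" "sets Pr = sets MH"
    and pi: "0 < \<pi>" "\<pi> < 1"
    and nonneg: "0 \<le> \<delta>" "0 \<le> \<delta>g" "0 \<le> \<epsilon>u"
    and reg_u: "avg_reg_log Pu pr \<eta> Q \<le> ennreal \<delta>"
    and reg_r: "avg_reg_log Pr pr \<eta> Q \<le> ennreal \<delta>g"
    and mi: "mutual_info (borel :: 'y measure) (count_space UNIV)
               (margin_joint \<pi> Pu pr (mix_measure \<alpha> pr pu) borel Q) \<le> ennreal \<epsilon>u"
  shows "TV (pred_law Pu (mix_measure \<alpha> pr pu) Q) (pred_law Pr (mix_measure \<alpha> pr pu) Q)
           \<le> sqrt (1/2) * (sqrt \<delta> + sqrt \<delta>g) + sqrt (\<epsilon>u / (2 * \<pi> * (1 - \<pi>)))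
             + TV (pred_law Pr pr Q) (pred_law Pr (mix_measure \<alpha> pr pu) Q)"
proof -
  define pd where "pd = mix_measure \<alpha> pr pu"
  have pd: "prob_space pd" "sets pd = sets (borel :: 'x measure)"
    using prob_space_mix_measure[OF pr(1) pu(1)] sets_mix_measure[OF pr(1) pu(1)] pr(2) pu(2) alpha
    by (simp_all add: pd_def)
  have "\<bar>measure (pred_law Pu pd Q) A - measure (pred_law Pr pd Q) A\<bar>
      \<le> sqrt (\<delta> / 2) + sqrt (\<delta>g / 2) + sqrt (\<epsilon>u / (2 * \<pi> * (1 - \<pi>))) + TV (pred_law Pr pr Q) (pred_law Pr pd Q)"
    if "A \<in> sets (pred_law Pu pd Q)" for A
  proof -
    have A: "A \<in> sets borel" using that sets_pred_law[OF Q Pu pd] by simp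
    have "\<bar>measure (pred_law Pu pr Q) A - measure (pred_law Pu pd Q) A\<bar> \<le> sqrt (\<epsilon>u / (2 * \<pi> * (1 - \<pi>)))"
      using pred_law_deviation_le_sqrt_mutual_info[OF Q Pu pr pd pi nonneg(3) _ A] mi by (simp add: pd_def)
    moreover have "\<bar>(\<integral>x. measure (\<eta> x) A \<partial>pr) - measure (pred_law Pu pr Q) A\<bar> \<le> sqrt (\<delta> / 2)"
      by (rule pred_law_deviation_le_sqrt_regret[OF Q eta Pu pr reg_u nonneg(1) A])
    moreover have "\<bar>(\<integral>x. measure (\<eta> x) A \<partial>pr) - measure (pred_law Pr pr Q) A\<bar> \<le> sqrt (\<delta>g / 2)"
      by (rule pred_law_deviation_le_sqrt_regret[OF Q eta Pr pr reg_r nonneg(2) A])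
    moreover have "\<bar>measure (pred_law Pr pr Q) A - measure (pred_law Pr pd Q) A\<bar> \<le> TV (pred_law Pr pr Q) (pred_law Pr pd Q)"
      using A by (intro abs_measure_diff_le_TV prob_space_pred_law[OF Q Pr] pr pd) (simp add: sets_pred_law[OF Q Pr pr])
    ultimately show ?thesis by linarith
  qed
  then have "TV (pred_law Pu pd Q) (pred_law Pr pd Q)
      \<le> sqrt (\<delta> / 2) + sqrt (\<delta>g / 2) + sqrt (\<epsilon>u / (2 * \<pi> * (1 - \<pi>))) + TV (pred_law Pr pr Q) (pred_law Pr pd Q)"
    by (rule TV_le)
  moreover have "sqrt (1/2) * (sqrt \<delta> + sqrt \<delta>g) = sqrt (\<delta> / 2) + sqrt (\<delta>g / 2)"
    by (simp add: real_sqrt_divide add_divide_distrib)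
  ultimately show ?thesis by (simp add: pd_def)
qed

end
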